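(* Let $\mathbf{w}_1,\mathbf{w}_2,\mathbf{w}_3:\mathbb{R}\to\mathbb{R}^7$ be differentiable and satisfy $\frac{d\mathbf{w}_1}{dt}=2\mathbf{w}_2\times\mathbf{w}_3$, $\frac{d\mathbf{w}_2}{dt}=2\mathbf{w}_1\times\mathbf{w}_3$, $\frac{d\mathbf{w}_3}{dt}=-2\mathbf{w}_1\times\mathbf{w}_2$. Then there exists $\gamma\in G_2$ such that $\mathbf{z}_j(t):=\gamma\mathbf{w}_j(t)$ lies in $\{0\}\oplus\mathbb{C}^3$ for all $t\in\mathbb{R}$ and $j=1,2,3$, satisfies $\omega(\mathbf{z}_j(t),\mathbf{z}_k(t))=0$ for all $j,k$ and $t$, and satisfies $\frac{d\mathbf{z}_1}{dt}=2\mathbf{z}_2\times'\mathbf{z}_3$, $\frac{d\mathbf{z}_2}{dt}=2\mathbf{z}_1\times'\mathbf{z}_3$, $\frac{d\mathbf{z}_3}{dt}=-2\mathbf{z}_1\times'\mathbf{z}_2$.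
   Context: Let $(x_1,\dots,x_7)$ be coordinates on $\mathbb{R}^7$ with Euclidean metric $g$, and write $dx_{ijk}=dx_i\wedge dx_j\wedge dx_k$. Define $\varphi=dx_{123}+dx_{145}+dx_{167}+dx_{246}-dx_{257}-dx_{347}-dx_{356}$ and $G_2=\{\gamma\in GL(7,\mathbb{R}):\gamma^*\varphi=\varphi\}$. The cross product $\times$ on $\mathbb{R}^7$ is defined by $g(u\times v,w)=\varphi(u,v,w)$. Identify $\mathbb{R}^7=\mathbb{R}\oplus\mathbb{C}^3$ via $(x_1,\dots,x_7)\mapsto(x_1,\,x_2+ix_3,\,x_4+ix_5,\,x_6+ix_7)$; then $\omega=dx_{23}+dx_{45}+dx_{67}$ is the standard symplectic form on $\mathbb{C}^3$, $\Omega=dz_1\wedge dz_2\wedge dz_3$ is the holomorphic volume form, and $\varphi=dx_1\wedge\omega+\mathrm{Re}\,\Omega$. The cross product $\times'$ on $\mathbb{C}^3$ (viewed as a real vector space) is defined by $(u\times' v)^d=(\mathrm{Re}\,\Omega)_{abc}u^av^bg^{cd}$. *)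

theory Defs
  imports "HOL-Analysis.Analysis"
begin

text \<open>R^7 is modelled as real^7. The index type 7 has the seven elements
  of_nat 1, ..., of_nat 6, of_nat 7 (= 0); coordinate x_i (i = 1..7) is coord v i.\<close>

definition coord :: "real^7 \<Rightarrow> nat \<Rightarrow> real" where
  "coord v i = v $ (of_nat i :: 7)"

text \<open>dx_i \<and> dx_j \<and> dx_k evaluated on (u,v,w): the 3x3 determinant.\<close>
definition dx3 :: "nat \<Rightarrow> nat \<Rightarrow> nat \<Rightarrow> real^7 \<Rightarrow> real^7 \<Rightarrow> real^7 \<Rightarrow> real" where
  "dx3 i j k u v w =
     coord u i * (coord v j * coord w k - coord v k * coord w j)
   - coord u j * (coord v i * coord w k - coord v k * coord w i)
   + coord u k * (coord v i * coord w j - coord v j * coord w i)"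

definition dx2 :: "nat \<Rightarrow> nat \<Rightarrow> real^7 \<Rightarrow> real^7 \<Rightarrow> real" where
  "dx2 i j u v = coord u i * coord v j - coord u j * coord v i"

definition phi :: "real^7 \<Rightarrow> real^7 \<Rightarrow> real^7 \<Rightarrow> real" where
  "phi u v w = dx3 1 2 3 u v w + dx3 1 4 5 u v w + dx3 1 6 7 u v w + dx3 2 4 6 u v w
             - dx3 2 5 7 u v w - dx3 3 4 7 u v w - dx3 3 5 6 u v w"

definition G2 :: "(real^7^7) set" where
  "G2 = {\<gamma>. invertible \<gamma> \<and> (\<forall>u v w. phi (\<gamma> *v u) (\<gamma> *v v) (\<gamma> *v w) = phi u v w)}"

text \<open>Cross product: g(u x v, w) = phi(u,v,w), i.e. (u x v)_k = phi(u,v,e_k).\<close>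
definition cross7 :: "real^7 \<Rightarrow> real^7 \<Rightarrow> real^7" where
  "cross7 u v = (\<chi> k. phi u v (axis k 1))"

definition omega :: "real^7 \<Rightarrow> real^7 \<Rightarrow> real" where
  "omega u v = dx2 2 3 u v + dx2 4 5 u v + dx2 6 7 u v"

text \<open>Complex coordinates z_1 = x_2 + i x_3, z_2 = x_4 + i x_5, z_3 = x_6 + i x_7;
  dz_j(u) is the complex number below.\<close>
definition dz :: "nat \<Rightarrow> real^7 \<Rightarrow> complex" where
  "dz j u = Complex (coord u (2*j)) (coord u (2*j+1))"

text \<open>Re Omega(u,v,w) = Re (dz1 \<and> dz2 \<and> dz3)(u,v,w) = Re det [dz_j(.)].\<close>
definition ReOmega :: "real^7 \<Rightarrow> real^7 \<Rightarrow> real^7 \<Rightarrow> real" where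
  "ReOmega u v w = Re (
      dz 1 u * (dz 2 v * dz 3 w - dz 3 v * dz 2 w)
    - dz 2 u * (dz 1 v * dz 3 w - dz 3 v * dz 1 w)
    + dz 3 u * (dz 1 v * dz 2 w - dz 2 v * dz 1 w))"

text \<open>Cross product on C^3 = {0} (+) C^3: (u x' v)^d = (Re Omega)_{abc} u^a v^b g^{cd},
  i.e. (u x' v)_d = Re Omega(u, v, e_d). Its x_1-component is automatically 0.\<close>
definition crossC :: "real^7 \<Rightarrow> real^7 \<Rightarrow> real^7" where
  "crossC u v = (\<chi> k. ReOmega u v (axis k 1))"

end

(* Choose a unit vector n orthogonal to the six vectors w_j(0) and w_j(0) \<times> w_k(0); this is possible
   in dimension 7.  By the identity u \<times> (u \<times> v) = <u, v> u - |u|^2 v, the normal components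
   <n, w_j> and <n, w_j \<times> w_k> satisfy a linear system of ODEs whose coefficients are the Gram
   entries <w_j, w_k>.  They vanish at t = 0, so a Gronwall estimate for the sum of their squares
   shows that they vanish for all t.  Some gamma in G_2 maps n to e_1: the stabiliser SU(3) of e_1
   acts transitively on the unit sphere of C^3, and a rotation of the (x_1, x_2)-plane finishes
   the job.  Then gamma w_j has no e_1-component, omega(gamma w_j, gamma w_k) = <n, w_j \<times> w_k> = 0,
   gamma commutes with the cross product, and on omega-isotropic vectors of C^3 the cross
   products \<times> and \<times>' agree. *)

theory Submission
  imports Defs
begin

lemma UNIV_7: "(UNIV :: 7 set) = {1, 2, 3, 4, 5, 6, 7}"
proof -
  have "card {1, 2, 3, 4, 5, 6, 7 :: 7} = card (UNIV :: 7 set)" by simp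
  then show ?thesis
    using card_subset_eq[of "UNIV :: 7 set" "{1, 2, 3, 4, 5, 6, 7}"] by simp
qed

lemma sum_UNIV_7:
  "(\<Sum>i\<in>UNIV. f (i :: 7)) = f 1 + f 2 + f 3 + f 4 + f 5 + f 6 + (f 7 :: 'a :: comm_monoid_add)"
  unfolding UNIV_7 by (simp add: algebra_simps)

lemma vec7_eq_iff:
  "(x :: 'a^7) = y \<longleftrightarrow>
     x$1 = y$1 \<and> x$2 = y$2 \<and> x$3 = y$3 \<and> x$4 = y$4 \<and> x$5 = y$5 \<and> x$6 = y$6 \<and> x$7 = y$7"
proof -
  have cases: "i = 1 \<or> i = 2 \<or> i = 3 \<or> i = 4 \<or> i = 5 \<or> i = 6 \<or> i = 7" for i :: 7
    using UNIV_7 by blast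
  show ?thesis
    unfolding vec_eq_iff
  proof (intro iffI allI)
    fix i :: 7
    assume "x$1 = y$1 \<and> x$2 = y$2 \<and> x$3 = y$3 \<and> x$4 = y$4 \<and> x$5 = y$5 \<and> x$6 = y$6 \<and> x$7 = y$7"
    then show "x $ i = y $ i" using cases[of i] by auto
  qed simp
qed

lemma inner_vec7:
  "(x :: real^7) \<bullet> y = x$1 * y$1 + x$2 * y$2 + x$3 * y$3 + x$4 * y$4 + x$5 * y$5 + x$6 * y$6 + x$7 * y$7"
  unfolding inner_vec_def sum_UNIV_7 by simp

lemma axis_nth_if: "axis i a $ j = (if j = i then a else 0)"
  by (simp add: axis_def)

lemmas cross7_simps = cross7_def phi_def dx3_def coord_def axis_nth_if

lemma inner_cross7: "cross7 u v \<bullet> w = phi u v w"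
  unfolding inner_vec7 by (simp add: cross7_simps algebra_simps)

lemma phi_cyclic: "phi u v w = phi v w u"
  unfolding phi_def dx3_def by (simp add: algebra_simps)

lemma cross7_same [simp]: "cross7 u u = 0"
  unfolding vec7_eq_iff by (simp add: cross7_simps)

lemma cross7_commute: "cross7 u v = - cross7 v u"
  unfolding vec7_eq_iff by (simp add: cross7_simps algebra_simps)

interpretation cross7: bounded_bilinear cross7
proof -
  have "bilinear cross7"
    unfolding bilinear_def by (auto intro!: linearI simp: vec7_eq_iff cross7_simps algebra_simps)
  then show "bounded_bilinear cross7"
    using bilinear_conv_bounded_bilinear by blast
qed

lemma cross7_cross7_same:
  "cross7 x (cross7 x y) = (x \<bullet> y) *\<^sub>R x - (x \<bullet> x) *\<^sub>R y"
  "cross7 x (cross7 y x) = (x \<bullet> x) *\<^sub>R y - (x \<bullet> y) *\<^sub>R x"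
  "cross7 (cross7 x y) x = (x \<bullet> x) *\<^sub>R y - (x \<bullet> y) *\<^sub>R x"
  "cross7 (cross7 y x) x = (x \<bullet> y) *\<^sub>R x - (x \<bullet> x) *\<^sub>R y"
proof -
  show xxy: "cross7 x (cross7 x y) = (x \<bullet> y) *\<^sub>R x - (x \<bullet> x) *\<^sub>R y"
    unfolding vec7_eq_iff inner_vec7 by (simp add: cross7_simps) algebra
  have "cross7 y x = - cross7 x y" "cross7 (cross7 x y) x = - cross7 x (cross7 x y)"
    "cross7 (cross7 y x) x = - cross7 x (cross7 y x)"
    by (rule cross7_commute)+
  with xxy show "cross7 x (cross7 y x) = (x \<bullet> x) *\<^sub>R y - (x \<bullet> y) *\<^sub>R x"
    "cross7 (cross7 x y) x = (x \<bullet> x) *\<^sub>R y - (x \<bullet> y) *\<^sub>R x"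
    "cross7 (cross7 y x) x = (x \<bullet> y) *\<^sub>R x - (x \<bullet> x) *\<^sub>R y"
    by (simp_all only: cross7.minus_right) simp_all
qed

lemma omega_eq_phi: "omega u v = phi (axis 1 1) u v"
  unfolding omega_def phi_def dx3_def dx2_def by (simp add: coord_def axis_nth_if)

lemma crossC_eq_cross7:
  assumes "coord u 1 = 0" "coord v 1 = 0" "omega u v = 0"
  shows "crossC u v = cross7 u v"
  using assms unfolding vec7_eq_iff omega_def dx2_def
  by (simp add: crossC_def ReOmega_def dz_def complex_eq_iff cross7_simps algebra_simps)

section \<open>Orthogonal automorphisms of \<open>\<phi>\<close>\<close>

text \<open>Elements of \<open>G\<^sub>2\<close> are automatically orthogonal; since only orthogonal ones are
  constructed below, orthogonality is built into this notion rather than derived.\<close>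

definition phi_isometry :: "real^7^7 \<Rightarrow> bool" where
  "phi_isometry g \<longleftrightarrow> (\<forall>x y. (g *v x) \<bullet> (g *v y) = x \<bullet> y) \<and>
     (\<forall>u v w. phi (g *v u) (g *v v) (g *v w) = phi u v w)"

lemma phi_isometry_mult: "phi_isometry A \<Longrightarrow> phi_isometry B \<Longrightarrow> phi_isometry (A ** B)"
  unfolding phi_isometry_def by (simp add: matrix_vector_mul_assoc[symmetric])

lemma phi_isometry_invertible:
  assumes "phi_isometry g"
  shows "invertible g"
proof -
  have "x = 0" if "g *v x = 0" for x
    using assms that unfolding phi_isometry_def by (metis inner_eq_zero_iff inner_zero_left)
  then show ?thesis
    by (simp add: invertible_left_inverse matrix_left_invertible_ker)
qed

lemma phi_isometry_in_G2: "phi_isometry g \<Longrightarrow> g \<in> G2"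
  using phi_isometry_invertible unfolding G2_def phi_isometry_def by blast

lemma phi_isometry_cross7:
  assumes "phi_isometry g"
  shows "g *v cross7 u v = cross7 (g *v u) (g *v v)"
proof -
  have "surj ((*v) g)"
    using phi_isometry_invertible[OF assms]
    by (simp add: invertible_right_inverse matrix_right_invertible_surjective)
  moreover have "(g *v cross7 u v) \<bullet> (g *v x) = cross7 (g *v u) (g *v v) \<bullet> (g *v x)" for x
    using assms unfolding phi_isometry_def by (simp add: inner_cross7)
  ultimately show ?thesis
    by (metis surjD vector_eq_rdot)
qed

lemma coord1_phi_isometry:
  assumes "phi_isometry g" "g *v n = axis 1 1"
  shows "coord (g *v u) 1 = n \<bullet> u"
  using assms unfolding phi_isometry_def coord_def
  by (metis cart_eq_inner_axis inner_commute of_nat_1)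

lemma omega_phi_isometry:
  assumes "phi_isometry g" "g *v n = axis 1 1"
  shows "omega (g *v u) (g *v v) = n \<bullet> cross7 u v"
proof -
  have "omega (g *v u) (g *v v) = phi (g *v n) (g *v u) (g *v v)"
    by (simp add: omega_eq_phi assms(2))
  also have "\<dots> = phi u v n"
    using assms(1) phi_cyclic unfolding phi_isometry_def by metis
  finally show ?thesis
    by (simp add: inner_cross7 inner_commute[of n])
qed

lemma crossC_phi_isometry:
  assumes "phi_isometry g" "g *v n = axis 1 1"
    and "n \<bullet> u = 0" "n \<bullet> v = 0" "n \<bullet> cross7 u v = 0"
  shows "crossC (g *v u) (g *v v) = g *v cross7 u v"
  using assms crossC_eq_cross7 coord1_phi_isometry omega_phi_isometry phi_isometry_cross7
  by metis

lemma has_vector_derivative_phi_isometry: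
  assumes "(w has_vector_derivative c *\<^sub>R cross7 x y) (at t)"
    and "phi_isometry g" "g *v n = axis 1 1"
    and "n \<bullet> x = 0" "n \<bullet> y = 0" "n \<bullet> cross7 x y = 0"
  shows "((\<lambda>s. g *v w s) has_vector_derivative c *\<^sub>R crossC (g *v x) (g *v y)) (at t)"
  using bounded_linear.has_vector_derivative[OF matrix_vector_mul_bounded_linear assms(1), of g]
  by (simp add: matrix_vector_mult_scaleR crossC_phi_isometry[OF assms(2-6)])

section \<open>Transitivity on the unit sphere\<close>

definition vec7 :: "'a \<Rightarrow> 'a \<Rightarrow> 'a \<Rightarrow> 'a \<Rightarrow> 'a \<Rightarrow> 'a \<Rightarrow> 'a \<Rightarrow> 'a^7" where
  "vec7 x1 x2 x3 x4 x5 x6 x7 = (\<chi> i. if i = 1 then x1 else if i = 2 then x2 else if i = 3 then x3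
     else if i = 4 then x4 else if i = 5 then x5 else if i = 6 then x6 else x7)"

lemma vec7_nth [simp]:
  "vec7 x1 x2 x3 x4 x5 x6 x7 $ 1 = x1" "vec7 x1 x2 x3 x4 x5 x6 x7 $ 2 = x2"
  "vec7 x1 x2 x3 x4 x5 x6 x7 $ 3 = x3" "vec7 x1 x2 x3 x4 x5 x6 x7 $ 4 = x4"
  "vec7 x1 x2 x3 x4 x5 x6 x7 $ 5 = x5" "vec7 x1 x2 x3 x4 x5 x6 x7 $ 6 = x6"
  "vec7 x1 x2 x3 x4 x5 x6 x7 $ 7 = x7"
  by (simp_all add: vec7_def)

text \<open>With \<open>\<alpha> = p + i q\<close> and \<open>\<beta> = r + i s\<close>, the map \<open>su2_12\<close> acts on
  \<open>(z\<^sub>1, z\<^sub>2)\<close> by the SU(2) matrix \<open>[[\<alpha>, \<beta>], [-\<beta>\<^sup>*, \<alpha>\<^sup>*]]\<close>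
  and \<open>su2_13\<close> acts likewise on \<open>(z\<^sub>1, z\<^sub>3)\<close>; both lie in the stabiliser SU(3)
  of \<open>e\<^sub>1\<close>.\<close>

definition su2_12 :: "real \<Rightarrow> real \<Rightarrow> real \<Rightarrow> real \<Rightarrow> real^7 \<Rightarrow> real^7" where
  "su2_12 p q r s x = vec7 (x$1)
     (p * x$2 - q * x$3 + r * x$4 - s * x$5) (q * x$2 + p * x$3 + s * x$4 + r * x$5)
     (- r * x$2 - s * x$3 + p * x$4 + q * x$5) (s * x$2 - r * x$3 - q * x$4 + p * x$5)
     (x$6) (x$7)"

definition su2_13 :: "real \<Rightarrow> real \<Rightarrow> real \<Rightarrow> real \<Rightarrow> real^7 \<Rightarrow> real^7" where
  "su2_13 p q r s x = vec7 (x$1)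
     (p * x$2 - q * x$3 + r * x$6 - s * x$7) (q * x$2 + p * x$3 + s * x$6 + r * x$7)
     (x$4) (x$5)
     (- r * x$2 - s * x$3 + p * x$6 + q * x$7) (s * x$2 - r * x$3 - q * x$6 + p * x$7)"

text \<open>A rotation of the \<open>(x\<^sub>1, x\<^sub>2)\<close>-plane preserves \<open>\<phi>\<close> only together with the
  same rotation of the \<open>(x\<^sub>4, x\<^sub>7)\<close>-plane.\<close>

definition rot_12_47 :: "real \<Rightarrow> real \<Rightarrow> real^7 \<Rightarrow> real^7" where
  "rot_12_47 c s x = vec7 (c * x$1 + s * x$2) (- s * x$1 + c * x$2) (x$3)
     (c * x$4 + s * x$7) (x$5) (x$6) (- s * x$4 + c * x$7)"

lemma matrix_su2_12: "matrix (su2_12 p q r s) *v x = su2_12 p q r s x"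
  unfolding vec7_eq_iff by (simp add: matrix_def matrix_vector_mult_def sum_UNIV_7 su2_12_def axis_nth_if)

lemma matrix_su2_13: "matrix (su2_13 p q r s) *v x = su2_13 p q r s x"
  unfolding vec7_eq_iff by (simp add: matrix_def matrix_vector_mult_def sum_UNIV_7 su2_13_def axis_nth_if)

lemma matrix_rot_12_47: "matrix (rot_12_47 c s) *v x = rot_12_47 c s x"
  unfolding vec7_eq_iff by (simp add: matrix_def matrix_vector_mult_def sum_UNIV_7 rot_12_47_def axis_nth_if)

lemma phi_isometry_su2_12:
  assumes "p\<^sup>2 + q\<^sup>2 + r\<^sup>2 + s\<^sup>2 = 1"
  shows "phi_isometry (matrix (su2_12 p q r s))"
proof -
  have "su2_12 p q r s x \<bullet> su2_12 p q r s y = x \<bullet> y" for x y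
    using assms unfolding inner_vec7 by (simp add: su2_12_def) algebra
  moreover have "phi (su2_12 p q r s u) (su2_12 p q r s v) (su2_12 p q r s w) = phi u v w" for u v w
    using assms unfolding phi_def dx3_def coord_def by (simp add: su2_12_def) algebra
  ultimately show ?thesis unfolding phi_isometry_def matrix_su2_12 by simp
qed

lemma phi_isometry_su2_13:
  assumes "p\<^sup>2 + q\<^sup>2 + r\<^sup>2 + s\<^sup>2 = 1"
  shows "phi_isometry (matrix (su2_13 p q r s))"
proof -
  have "su2_13 p q r s x \<bullet> su2_13 p q r s y = x \<bullet> y" for x y
    using assms unfolding inner_vec7 by (simp add: su2_13_def) algebra
  moreover have "phi (su2_13 p q r s u) (su2_13 p q r s v) (su2_13 p q r s w) = phi u v w" for u v w
    using assms unfolding phi_def dx3_def coord_def by (simp add: su2_13_def) algebra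
  ultimately show ?thesis unfolding phi_isometry_def matrix_su2_13 by simp
qed

lemma phi_isometry_rot_12_47:
  assumes "c\<^sup>2 + s\<^sup>2 = 1"
  shows "phi_isometry (matrix (rot_12_47 c s))"
proof -
  have "rot_12_47 c s x \<bullet> rot_12_47 c s y = x \<bullet> y" for x y
    using assms unfolding inner_vec7 by (simp add: rot_12_47_def) algebra
  moreover have "phi (rot_12_47 c s u) (rot_12_47 c s v) (rot_12_47 c s w) = phi u v w" for u v w
    using assms unfolding phi_def dx3_def coord_def by (simp add: rot_12_47_def) algebra
  ultimately show ?thesis unfolding phi_isometry_def matrix_rot_12_47 by simp
qed

lemma su2_normalise:
  fixes a b c d :: real
  obtains p q r s where "p\<^sup>2 + q\<^sup>2 + r\<^sup>2 + s\<^sup>2 = 1"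
    "p * a - q * b + r * c - s * d = sqrt (a\<^sup>2 + b\<^sup>2 + c\<^sup>2 + d\<^sup>2)"
    "q * a + p * b + s * c + r * d = 0"
    "- r * a - s * b + p * c + q * d = 0"
    "s * a - r * b - q * c + p * d = 0"
proof (cases "a\<^sup>2 + b\<^sup>2 + c\<^sup>2 + d\<^sup>2 = 0")
  case True
  then have "a = 0 \<and> b = 0 \<and> c = 0 \<and> d = 0"
    using zero_le_power2[of a] zero_le_power2[of b] zero_le_power2[of c] zero_le_power2[of d]
    by (simp add: add_nonneg_eq_0_iff)
  then show ?thesis by (intro that[of 1 0 0 0]) simp_all
next
  case False
  define R where "R = sqrt (a\<^sup>2 + b\<^sup>2 + c\<^sup>2 + d\<^sup>2)"
  have "R \<noteq> 0" using False unfolding R_def by (simp add: add_nonneg_nonneg)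
  moreover have "R\<^sup>2 = a\<^sup>2 + b\<^sup>2 + c\<^sup>2 + d\<^sup>2" unfolding R_def by (simp add: add_nonneg_nonneg)
  \<comment> \<open>the SU(2) matrix with \<open>\<alpha> = z\<^sub>1\<^sup>* / |z|\<close>, \<open>\<beta> = z\<^sub>2\<^sup>* / |z|\<close> maps \<open>z = (z\<^sub>1, z\<^sub>2)\<close> to \<open>(|z|, 0)\<close>\<close>
  ultimately show ?thesis
    using False by (intro that[of "a / R" "- b / R" "c / R" "- d / R", folded R_def])
      (simp_all add: divide_simps, simp_all add: algebra_simps power2_eq_square)
qed

lemma su2_12_normalise:
  obtains p q r s where "p\<^sup>2 + q\<^sup>2 + r\<^sup>2 + s\<^sup>2 = 1"
    "su2_12 p q r s x = vec7 (x$1) (sqrt ((x$2)\<^sup>2 + (x$3)\<^sup>2 + (x$4)\<^sup>2 + (x$5)\<^sup>2)) 0 0 0 (x$6) (x$7)"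
proof -
  obtain p q r s where "p\<^sup>2 + q\<^sup>2 + r\<^sup>2 + s\<^sup>2 = 1"
    "p * x$2 - q * x$3 + r * x$4 - s * x$5 = sqrt ((x$2)\<^sup>2 + (x$3)\<^sup>2 + (x$4)\<^sup>2 + (x$5)\<^sup>2)"
    "q * x$2 + p * x$3 + s * x$4 + r * x$5 = 0"
    "- r * x$2 - s * x$3 + p * x$4 + q * x$5 = 0"
    "s * x$2 - r * x$3 - q * x$4 + p * x$5 = 0"
    by (rule su2_normalise)
  then show ?thesis by (intro that[of p q r s]) (simp_all add: su2_12_def vec7_eq_iff)
qed

lemma su2_13_normalise:
  obtains p q r s where "p\<^sup>2 + q\<^sup>2 + r\<^sup>2 + s\<^sup>2 = 1"
    "su2_13 p q r s x = vec7 (x$1) (sqrt ((x$2)\<^sup>2 + (x$3)\<^sup>2 + (x$6)\<^sup>2 + (x$7)\<^sup>2)) 0 (x$4) (x$5) 0 0"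
proof -
  obtain p q r s where "p\<^sup>2 + q\<^sup>2 + r\<^sup>2 + s\<^sup>2 = 1"
    "p * x$2 - q * x$3 + r * x$6 - s * x$7 = sqrt ((x$2)\<^sup>2 + (x$3)\<^sup>2 + (x$6)\<^sup>2 + (x$7)\<^sup>2)"
    "q * x$2 + p * x$3 + s * x$6 + r * x$7 = 0"
    "- r * x$2 - s * x$3 + p * x$6 + q * x$7 = 0"
    "s * x$2 - r * x$3 - q * x$6 + p * x$7 = 0"
    by (rule su2_normalise)
  then show ?thesis by (intro that[of p q r s]) (simp_all add: su2_13_def vec7_eq_iff)
qed

lemma rot_12_47_to_e1: "c\<^sup>2 + s\<^sup>2 = 1 \<Longrightarrow> rot_12_47 c s (vec7 c s 0 0 0 0 0) = axis 1 1"
  by (simp add: rot_12_47_def vec7_eq_iff axis_nth_if power2_eq_square)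

lemma phi_isometry_to_e1:
  assumes "norm n = 1"
  obtains g where "phi_isometry g" "g *v n = axis 1 1"
proof -
  obtain p q r s where A: "p\<^sup>2 + q\<^sup>2 + r\<^sup>2 + s\<^sup>2 = 1"
    and n1: "su2_12 p q r s n = vec7 (n$1) (sqrt ((n$2)\<^sup>2 + (n$3)\<^sup>2 + (n$4)\<^sup>2 + (n$5)\<^sup>2)) 0 0 0 (n$6) (n$7)"
      (is "_ = ?n1")
    by (rule su2_12_normalise)
  obtain p' q' r' s' where B: "p'\<^sup>2 + q'\<^sup>2 + r'\<^sup>2 + s'\<^sup>2 = 1"
    and n2: "su2_13 p' q' r' s' ?n1 = vec7 (n$1) (sqrt ((?n1$2)\<^sup>2 + (n$6)\<^sup>2 + (n$7)\<^sup>2)) 0 0 0 0 0"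
      (is "_ = vec7 _ ?R _ _ _ _ _")
    by (rule su2_13_normalise[where x = ?n1]) simp
  have "(n$1)\<^sup>2 + ?R\<^sup>2 = 1"
    using assms unfolding norm_eq_sqrt_inner inner_vec7 by (simp add: add_nonneg_nonneg power2_eq_square)
  then have C: "phi_isometry (matrix (rot_12_47 (n$1) ?R))"
    and n3: "rot_12_47 (n$1) ?R (vec7 (n$1) ?R 0 0 0 0 0) = axis 1 1"
    by (rule phi_isometry_rot_12_47, rule rot_12_47_to_e1)
  define g where "g = matrix (rot_12_47 (n$1) ?R) ** matrix (su2_13 p' q' r' s') ** matrix (su2_12 p q r s)"
  show ?thesis
  proof
    show "phi_isometry g"
      unfolding g_def using A B C by (intro phi_isometry_mult phi_isometry_su2_12 phi_isometry_su2_13)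
    show "g *v n = axis 1 1"
      unfolding g_def
      by (simp only: matrix_vector_mul_assoc[symmetric] matrix_su2_12 matrix_su2_13 matrix_rot_12_47 n1 n2 n3)
  qed
qed

section \<open>Energy estimates\<close>

lemma gronwall_vanishes_forward:
  fixes E E' :: "real \<Rightarrow> real"
  assumes deriv: "\<And>t. (E has_real_derivative E' t) (at t)"
    and nonneg: "\<And>t. 0 \<le> E t" and "E 0 = 0"
    and bound: "\<And>t. t \<in> {0..T} \<Longrightarrow> E' t \<le> C * E t"
    and t: "t \<in> {0..T}"
  shows "E t = 0"
proof -
  have "E t * exp (- C * t) \<le> E 0 * exp (- C * 0)"
  proof (rule DERIV_nonpos_imp_nonincreasing[where f = "\<lambda>s. E s * exp (- C * s)"])
    fix s assume "0 \<le> s" "s \<le> t"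
    then have "(E' s - C * E s) * exp (- C * s) \<le> 0"
      using bound[of s] t by (simp add: mult_nonpos_nonneg)
    moreover have "((\<lambda>s. E s * exp (- C * s)) has_real_derivative (E' s - C * E s) * exp (- C * s)) (at s)"
      by (auto intro!: derivative_eq_intros deriv simp: algebra_simps)
    ultimately show "\<exists>y. ((\<lambda>s. E s * exp (- C * s)) has_real_derivative y) (at s) \<and> y \<le> 0"
      by blast
  qed (use t in simp)
  then show ?thesis
    using \<open>E 0 = 0\<close> nonneg[of t] by (simp add: mult_le_0_iff)
qed

lemma gronwall_vanishes:
  fixes E E' :: "real \<Rightarrow> real"
  assumes deriv: "\<And>t. (E has_real_derivative E' t) (at t)"
    and nonneg: "\<And>t. 0 \<le> E t" and E0: "E 0 = 0"
    and bound: "\<And>t. t \<in> {-T..T} \<Longrightarrow> \<bar>E' t\<bar> \<le> C * E t"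
    and t: "t \<in> {-T..T}"
  shows "E t = 0"
proof (cases "0 \<le> t")
  case True
  show ?thesis
  proof (rule gronwall_vanishes_forward[OF deriv nonneg E0])
    show "E' s \<le> C * E s" if "s \<in> {0..T}" for s
      using bound[of s] that by auto
  qed (use t True in auto)
next
  case False
  have "((\<lambda>s. E (- s)) has_real_derivative - E' (- s)) (at s)" for s
    using DERIV_chain2[OF deriv DERIV_minus[OF DERIV_ident]] by simp
  then have "(\<lambda>s. E (- s)) (- t) = 0"
  proof (rule gronwall_vanishes_forward)
    show "- E' (- s) \<le> C * E (- s)" if "s \<in> {0..T}" for s
      using bound[of "- s"] that by auto
  qed (use nonneg E0 t False in auto)
  then show ?thesis by simp
qed

lemma abs_mult_le_half_sum_squares: "\<bar>x * y\<bar> \<le> (x\<^sup>2 + y\<^sup>2) / 2" for x y :: real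
proof -
  have "0 \<le> (\<bar>x\<bar> - \<bar>y\<bar>)\<^sup>2" by simp
  then show ?thesis by (simp add: power2_eq_square abs_mult algebra_simps)
qed

lemma normal_energy_derivative_bound:
  fixes a1 a2 a3 b1 b2 b3 g11 g22 g33 g12 g13 g23 K :: real
  assumes "\<bar>g11\<bar> \<le> K" "\<bar>g22\<bar> \<le> K" "\<bar>g33\<bar> \<le> K" "\<bar>g12\<bar> \<le> K" "\<bar>g13\<bar> \<le> K" "\<bar>g23\<bar> \<le> K"
  shows "\<bar>a1 * b1 + a2 * b2 - a3 * b3
      + b1 * (g13 * a3 - g33 * a1 + g12 * a2 - g22 * a1)
      + b2 * (g23 * a3 - g33 * a2 - g12 * a1 + g11 * a2)
      + b3 * (g22 * a3 - g23 * a2 + g13 * a1 - g11 * a3)\<bar>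
    \<le> (3/2 + 6 * K) * (a1\<^sup>2 + a2\<^sup>2 + a3\<^sup>2 + b1\<^sup>2 + b2\<^sup>2 + b3\<^sup>2)"
proof -
  define E where "E = a1\<^sup>2 + a2\<^sup>2 + a3\<^sup>2 + b1\<^sup>2 + b2\<^sup>2 + b3\<^sup>2"
  have plain: "\<bar>x * y\<bar> \<le> E / 2" if "x\<^sup>2 + y\<^sup>2 \<le> E" for x y
    using abs_mult_le_half_sum_squares[of x y] that by simp
  have weighted: "\<bar>g * (x * y)\<bar> \<le> K * (E / 2)" if "\<bar>g\<bar> \<le> K" "x\<^sup>2 + y\<^sup>2 \<le> E" for g x y
    unfolding abs_mult using that plain[OF that(2)] by (intro mult_mono) auto
  have "0 \<le> a1\<^sup>2" "0 \<le> a2\<^sup>2" "0 \<le> a3\<^sup>2" "0 \<le> b1\<^sup>2" "0 \<le> b2\<^sup>2" "0 \<le> b3\<^sup>2"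
    by simp_all
  then have sq: "a1\<^sup>2 + b1\<^sup>2 \<le> E" "a2\<^sup>2 + b2\<^sup>2 \<le> E" "a3\<^sup>2 + b3\<^sup>2 \<le> E"
    "a1\<^sup>2 + b2\<^sup>2 \<le> E" "a1\<^sup>2 + b3\<^sup>2 \<le> E" "a2\<^sup>2 + b1\<^sup>2 \<le> E"
    "a2\<^sup>2 + b3\<^sup>2 \<le> E" "a3\<^sup>2 + b1\<^sup>2 \<le> E" "a3\<^sup>2 + b2\<^sup>2 \<le> E"
    unfolding E_def by linarith+
  note products = plain[OF sq(1)] plain[OF sq(2)] plain[OF sq(3)]
    weighted[OF assms(5) sq(8)] weighted[OF assms(3) sq(1)] weighted[OF assms(4) sq(6)]
    weighted[OF assms(2) sq(1)] weighted[OF assms(6) sq(9)] weighted[OF assms(3) sq(2)]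
    weighted[OF assms(4) sq(4)] weighted[OF assms(1) sq(2)] weighted[OF assms(2) sq(3)]
    weighted[OF assms(6) sq(7)] weighted[OF assms(5) sq(5)] weighted[OF assms(1) sq(3)]
  have expand: "a1 * b1 + a2 * b2 - a3 * b3
      + b1 * (g13 * a3 - g33 * a1 + g12 * a2 - g22 * a1)
      + b2 * (g23 * a3 - g33 * a2 - g12 * a1 + g11 * a2)
      + b3 * (g22 * a3 - g23 * a2 + g13 * a1 - g11 * a3)
    = a1 * b1 + a2 * b2 - a3 * b3
      + g13 * (a3 * b1) - g33 * (a1 * b1) + g12 * (a2 * b1) - g22 * (a1 * b1)
      + g23 * (a3 * b2) - g33 * (a2 * b2) - g12 * (a1 * b2) + g11 * (a2 * b2)
      + g22 * (a3 * b3) - g23 * (a2 * b3) + g13 * (a1 * b3) - g11 * (a3 * b3)"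
    by algebra
  have "(3/2 + 6 * K) * E = 3 * (E / 2) + 12 * (K * (E / 2))"
    by (simp add: algebra_simps)
  then show ?thesis
    using products unfolding E_def[symmetric] expand abs_le_iff by linarith
qed

section \<open>Normal components of the flow\<close>

lemma exists_unit_orthogonal:
  fixes S :: "'a::euclidean_space set"
  assumes "finite S" "card S < DIM('a)"
  obtains n where "norm n = 1" "\<And>v. v \<in> S \<Longrightarrow> n \<bullet> v = 0"
proof -
  have "dim S < DIM('a)"
    using dim_le_card'[OF assms(1)] assms(2) by linarith
  then obtain x where "x \<noteq> 0" "\<And>v. v \<in> S \<Longrightarrow> x \<bullet> v = 0"
    using orthogonal_to_subspace_exists span_base unfolding orthogonal_def by metis
  then show ?thesis
    by (intro that[of "x /\<^sub>R norm x"]) auto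
qed

lemma has_real_derivative_inner_right:
  "(w has_vector_derivative w') F \<Longrightarrow> ((\<lambda>t. n \<bullet> w t) has_real_derivative n \<bullet> w') F"
  using bounded_linear.has_vector_derivative[OF bounded_linear_inner_right]
  by (simp add: has_real_derivative_iff_has_vector_derivative)

locale cross7_flow =
  fixes w1 w2 w3 :: "real \<Rightarrow> real^7"
  assumes w1_deriv: "\<And>t. (w1 has_vector_derivative (2 *\<^sub>R cross7 (w2 t) (w3 t))) (at t)"
      and w2_deriv: "\<And>t. (w2 has_vector_derivative (2 *\<^sub>R cross7 (w1 t) (w3 t))) (at t)"
      and w3_deriv: "\<And>t. (w3 has_vector_derivative (- 2 *\<^sub>R cross7 (w1 t) (w2 t))) (at t)"
begin

definition flow_vectors :: "real \<Rightarrow> (real^7) set" where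
  "flow_vectors t =
     {w1 t, w2 t, w3 t, cross7 (w2 t) (w3 t), cross7 (w1 t) (w3 t), cross7 (w1 t) (w2 t)}"

lemma card_flow_vectors: "card (flow_vectors t) < DIM(real^7)"
proof -
  have "card (flow_vectors t) \<le> 6"
    using card_length[of "[w1 t, w2 t, w3 t, cross7 (w2 t) (w3 t), cross7 (w1 t) (w3 t), cross7 (w1 t) (w2 t)]"]
    by (simp add: flow_vectors_def)
  then show ?thesis by simp
qed

lemma inner_w_has_derivative:
  "((\<lambda>t. n \<bullet> w1 t) has_real_derivative 2 * (n \<bullet> cross7 (w2 t) (w3 t))) (at t)"
  "((\<lambda>t. n \<bullet> w2 t) has_real_derivative 2 * (n \<bullet> cross7 (w1 t) (w3 t))) (at t)"
  "((\<lambda>t. n \<bullet> w3 t) has_real_derivative - 2 * (n \<bullet> cross7 (w1 t) (w2 t))) (at t)"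
  using has_real_derivative_inner_right[OF w1_deriv, of n]
    has_real_derivative_inner_right[OF w2_deriv, of n]
    has_real_derivative_inner_right[OF w3_deriv, of n]
  by simp_all

lemma inner_cross7_w_has_derivative:
  "((\<lambda>t. n \<bullet> cross7 (w2 t) (w3 t)) has_real_derivative
     2 * ((w1 t \<bullet> w3 t) * (n \<bullet> w3 t) - (w3 t \<bullet> w3 t) * (n \<bullet> w1 t)
        + (w1 t \<bullet> w2 t) * (n \<bullet> w2 t) - (w2 t \<bullet> w2 t) * (n \<bullet> w1 t))) (at t)"
  "((\<lambda>t. n \<bullet> cross7 (w1 t) (w3 t)) has_real_derivative
     2 * ((w2 t \<bullet> w3 t) * (n \<bullet> w3 t) - (w3 t \<bullet> w3 t) * (n \<bullet> w2 t)
        - (w1 t \<bullet> w2 t) * (n \<bullet> w1 t) + (w1 t \<bullet> w1 t) * (n \<bullet> w2 t))) (at t)"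
  "((\<lambda>t. n \<bullet> cross7 (w1 t) (w2 t)) has_real_derivative
     2 * ((w2 t \<bullet> w2 t) * (n \<bullet> w3 t) - (w2 t \<bullet> w3 t) * (n \<bullet> w2 t)
        + (w1 t \<bullet> w3 t) * (n \<bullet> w1 t) - (w1 t \<bullet> w1 t) * (n \<bullet> w3 t))) (at t)"
  by (rule DERIV_cong[OF has_real_derivative_inner_right[OF cross7.has_vector_derivative[OF w2_deriv w3_deriv]]]
        DERIV_cong[OF has_real_derivative_inner_right[OF cross7.has_vector_derivative[OF w1_deriv w3_deriv]]]
        DERIV_cong[OF has_real_derivative_inner_right[OF cross7.has_vector_derivative[OF w1_deriv w2_deriv]]],
      simp add: cross7.scaleR_left cross7.scaleR_right cross7.minus_right cross7_cross7_same
        inner_diff_right inner_add_right inner_commute algebra_simps)+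

lemma continuous_on_w: "continuous_on S w1" "continuous_on S w2" "continuous_on S w3"
  using w1_deriv w2_deriv w3_deriv
  by (auto intro!: continuous_at_imp_continuous_on has_vector_derivative_continuous)

lemma inner_w_bounded:
  obtains K where "\<And>s u v. s \<in> {-T..T} \<Longrightarrow> u \<in> {w1, w2, w3} \<Longrightarrow> v \<in> {w1, w2, w3} \<Longrightarrow>
    \<bar>u s \<bullet> v s\<bar> \<le> K"
proof -
  have "continuous_on {-T..T} (\<lambda>s. norm (w1 s) + norm (w2 s) + norm (w3 s))"
    by (intro continuous_intros continuous_on_w)
  then have "bounded ((\<lambda>s. norm (w1 s) + norm (w2 s) + norm (w3 s)) ` {-T..T})"
    by (intro compact_imp_bounded compact_continuous_image compact_Icc)
  then obtain M where "\<And>s. s \<in> {-T..T} \<Longrightarrow> \<bar>norm (w1 s) + norm (w2 s) + norm (w3 s)\<bar> \<le> M"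
    unfolding bounded_iff real_norm_def by blast
  then have M: "norm (w1 s) \<le> M" "norm (w2 s) \<le> M" "norm (w3 s) \<le> M" if "s \<in> {-T..T}" for s
    using that norm_ge_zero[of "w1 s"] norm_ge_zero[of "w2 s"] norm_ge_zero[of "w3 s"]
    by (smt (verit))+
  show ?thesis
  proof
    fix s u v assume s: "s \<in> {-T..T}" and "u \<in> {w1, w2, w3}" "v \<in> {w1, w2, w3}"
    then have "norm (u s) \<le> M" "norm (v s) \<le> M"
      using M[OF s] by auto
    then have "norm (u s) * norm (v s) \<le> M * M"
      by (intro mult_mono) (auto intro: order_trans[OF norm_ge_zero])
    then show "\<bar>u s \<bullet> v s\<bar> \<le> M * M"
      using Cauchy_Schwarz_ineq2[of "u s" "v s"] by linarith
  qed
qed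

definition normal_energy :: "real^7 \<Rightarrow> real \<Rightarrow> real" where
  "normal_energy n s = (n \<bullet> w1 s)\<^sup>2 + (n \<bullet> w2 s)\<^sup>2 + (n \<bullet> w3 s)\<^sup>2
     + (n \<bullet> cross7 (w2 s) (w3 s))\<^sup>2 + (n \<bullet> cross7 (w1 s) (w3 s))\<^sup>2
     + (n \<bullet> cross7 (w1 s) (w2 s))\<^sup>2"

lemma normal_energy_derivative_bounded:
  obtains E' C where "\<And>s. (normal_energy n has_real_derivative E' s) (at s)"
    "\<And>s. s \<in> {-T..T} \<Longrightarrow> \<bar>E' s\<bar> \<le> C * normal_energy n s"
proof -
  define a1 where "a1 s = n \<bullet> w1 s" for s
  define a2 where "a2 s = n \<bullet> w2 s" for s
  define a3 where "a3 s = n \<bullet> w3 s" for s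
  define b1 where "b1 s = n \<bullet> cross7 (w2 s) (w3 s)" for s
  define b2 where "b2 s = n \<bullet> cross7 (w1 s) (w3 s)" for s
  define b3 where "b3 s = n \<bullet> cross7 (w1 s) (w2 s)" for s
  define g11 where "g11 s = w1 s \<bullet> w1 s" for s
  define g22 where "g22 s = w2 s \<bullet> w2 s" for s
  define g33 where "g33 s = w3 s \<bullet> w3 s" for s
  define g12 where "g12 s = w1 s \<bullet> w2 s" for s
  define g13 where "g13 s = w1 s \<bullet> w3 s" for s
  define g23 where "g23 s = w2 s \<bullet> w3 s" for s
  define Q where "Q s = a1 s * b1 s + a2 s * b2 s - a3 s * b3 s
      + b1 s * (g13 s * a3 s - g33 s * a1 s + g12 s * a2 s - g22 s * a1 s)
      + b2 s * (g23 s * a3 s - g33 s * a2 s - g12 s * a1 s + g11 s * a2 s)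
      + b3 s * (g22 s * a3 s - g23 s * a2 s + g13 s * a1 s - g11 s * a3 s)" for s
  note defs = a1_def a2_def a3_def b1_def b2_def b3_def g11_def g22_def g33_def g12_def g13_def g23_def
  have E: "normal_energy n =
      (\<lambda>s. (a1 s)\<^sup>2 + (a2 s)\<^sup>2 + (a3 s)\<^sup>2 + (b1 s)\<^sup>2 + (b2 s)\<^sup>2 + (b3 s)\<^sup>2)"
    by (simp add: fun_eq_iff normal_energy_def defs)
  have da: "(a1 has_real_derivative 2 * b1 s) (at s)" "(a2 has_real_derivative 2 * b2 s) (at s)"
    "(a3 has_real_derivative - 2 * b3 s) (at s)" for s
    unfolding a1_def[abs_def] a2_def[abs_def] a3_def[abs_def] b1_def b2_def b3_def
    by (rule inner_w_has_derivative)+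
  have db: "(b1 has_real_derivative 2 * (g13 s * a3 s - g33 s * a1 s + g12 s * a2 s - g22 s * a1 s)) (at s)"
    "(b2 has_real_derivative 2 * (g23 s * a3 s - g33 s * a2 s - g12 s * a1 s + g11 s * a2 s)) (at s)"
    "(b3 has_real_derivative 2 * (g22 s * a3 s - g23 s * a2 s + g13 s * a1 s - g11 s * a3 s)) (at s)" for s
    unfolding defs[abs_def] by (rule inner_cross7_w_has_derivative)+
  obtain K where K: "\<And>s u v. s \<in> {-T..T} \<Longrightarrow> u \<in> {w1, w2, w3} \<Longrightarrow> v \<in> {w1, w2, w3} \<Longrightarrow>
      \<bar>u s \<bullet> v s\<bar> \<le> K"
    using inner_w_bounded by blast
  show ?thesis
  proof
    show "(normal_energy n has_real_derivative 4 * Q s) (at s)" for s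
      unfolding E by (rule derivative_eq_intros da db refl)+ (simp add: Q_def algebra_simps)
    show "\<bar>4 * Q s\<bar> \<le> (6 + 24 * K) * normal_energy n s" if "s \<in> {-T..T}" for s
    proof -
      have "\<bar>g11 s\<bar> \<le> K" "\<bar>g22 s\<bar> \<le> K" "\<bar>g33 s\<bar> \<le> K"
        "\<bar>g12 s\<bar> \<le> K" "\<bar>g13 s\<bar> \<le> K" "\<bar>g23 s\<bar> \<le> K"
        unfolding defs by (rule K[OF that]; simp)+
      then have "\<bar>Q s\<bar> \<le> (3/2 + 6 * K) * normal_energy n s"
        unfolding Q_def E by (rule normal_energy_derivative_bound)
      then have "\<bar>4 * Q s\<bar> \<le> 4 * ((3/2 + 6 * K) * normal_energy n s)"
        by (simp add: abs_mult)
      then show ?thesis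
        by (simp add: algebra_simps)
    qed
  qed
qed

lemma orthogonal_flow_vectors:
  assumes initial: "\<And>v. v \<in> flow_vectors 0 \<Longrightarrow> n \<bullet> v = 0"
    and v: "v \<in> flow_vectors t"
  shows "n \<bullet> v = 0"
proof -
  obtain E' C where deriv: "\<And>s. (normal_energy n has_real_derivative E' s) (at s)"
    and bound: "\<And>s. s \<in> {-\<bar>t\<bar>..\<bar>t\<bar>} \<Longrightarrow> \<bar>E' s\<bar> \<le> C * normal_energy n s"
    using normal_energy_derivative_bounded[where n = n and T = "\<bar>t\<bar>"] by blast
  have "normal_energy n t = 0"
  proof (rule gronwall_vanishes[OF deriv _ _ bound])
    show "0 \<le> normal_energy n s" for s
      by (simp add: normal_energy_def)
    show "normal_energy n 0 = 0"
      using initial by (simp add: normal_energy_def flow_vectors_def)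
  qed auto
  then show ?thesis
    using v unfolding normal_energy_def flow_vectors_def
    by (smt (verit) insertE singletonD zero_le_power2 zero_eq_power2)
qed

lemma orthogonal_flow_w:
  assumes "\<And>v. v \<in> flow_vectors 0 \<Longrightarrow> n \<bullet> v = 0" and "u \<in> {w1, w2, w3}"
  shows "n \<bullet> u t = 0"
  using assms(2) orthogonal_flow_vectors[OF assms(1), where t = t] by (auto simp: flow_vectors_def)

lemma orthogonal_flow_cross:
  assumes "\<And>v. v \<in> flow_vectors 0 \<Longrightarrow> n \<bullet> v = 0"
    and u: "u \<in> {w1, w2, w3}" and v: "v \<in> {w1, w2, w3}"
  shows "n \<bullet> cross7 (u t) (v t) = 0"
proof -
  have normal: "n \<bullet> cross7 (w2 t) (w3 t) = 0" "n \<bullet> cross7 (w1 t) (w3 t) = 0" "n \<bullet> cross7 (w1 t) (w2 t) = 0"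
    by (rule orthogonal_flow_vectors[OF assms(1), where t = t]; simp add: flow_vectors_def)+
  then have "n \<bullet> cross7 (w3 t) (w2 t) = 0" "n \<bullet> cross7 (w3 t) (w1 t) = 0" "n \<bullet> cross7 (w2 t) (w1 t) = 0"
    by (simp_all add: cross7_commute[of "w3 t"] cross7_commute[of "w2 t" "w1 t"])
  with normal u v show ?thesis
    by auto
qed

end

theorem mainTheorem4:
  fixes w1 w2 w3 :: "real \<Rightarrow> real^7"
  assumes d1: "\<And>t. (w1 has_vector_derivative (2 *\<^sub>R cross7 (w2 t) (w3 t))) (at t)"
      and d2: "\<And>t. (w2 has_vector_derivative (2 *\<^sub>R cross7 (w1 t) (w3 t))) (at t)"
      and d3: "\<And>t. (w3 has_vector_derivative (- 2 *\<^sub>R cross7 (w1 t) (w2 t))) (at t)"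
  shows "\<exists>\<gamma>\<in>G2.
    (\<forall>t. \<forall>w\<in>{w1, w2, w3}. coord (\<gamma> *v w t) 1 = 0) \<and>
    (\<forall>t. \<forall>w\<in>{w1, w2, w3}. \<forall>w'\<in>{w1, w2, w3}. omega (\<gamma> *v w t) (\<gamma> *v w' t) = 0) \<and>
    (\<forall>t. ((\<lambda>s. \<gamma> *v w1 s) has_vector_derivative
            (2 *\<^sub>R crossC (\<gamma> *v w2 t) (\<gamma> *v w3 t))) (at t)) \<and>
    (\<forall>t. ((\<lambda>s. \<gamma> *v w2 s) has_vector_derivative
            (2 *\<^sub>R crossC (\<gamma> *v w1 t) (\<gamma> *v w3 t))) (at t)) \<and>
    (\<forall>t. ((\<lambda>s. \<gamma> *v w3 s) has_vector_derivative
            (- 2 *\<^sub>R crossC (\<gamma> *v w1 t) (\<gamma> *v w2 t))) (at t))"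
proof -
  interpret cross7_flow w1 w2 w3
    using d1 d2 d3 by unfold_locales
  obtain n where unit: "norm n = 1" and initial: "\<And>v. v \<in> flow_vectors 0 \<Longrightarrow> n \<bullet> v = 0"
    using exists_unit_orthogonal[OF _ card_flow_vectors] unfolding flow_vectors_def by blast
  note normal = orthogonal_flow_w[OF initial] orthogonal_flow_cross[OF initial]
  obtain g where g: "phi_isometry g" "g *v n = axis 1 1"
    using phi_isometry_to_e1[OF unit] by blast
  show ?thesis
  proof (intro bexI[of _ g] conjI allI ballI)
    show "g \<in> G2" using phi_isometry_in_G2[OF g(1)] .
  next
    fix t and w assume "w \<in> {w1, w2, w3}"
    then show "coord (g *v w t) 1 = 0"
      using coord1_phi_isometry[OF g] normal by simp
  next
    fix t and w w' assume "w \<in> {w1, w2, w3}" "w' \<in> {w1, w2, w3}"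
    then show "omega (g *v w t) (g *v w' t) = 0"
      using omega_phi_isometry[OF g] normal by simp
  next
    fix t
    show "((\<lambda>s. g *v w1 s) has_vector_derivative 2 *\<^sub>R crossC (g *v w2 t) (g *v w3 t)) (at t)"
      by (rule has_vector_derivative_phi_isometry[OF d1 g]) (rule normal; simp)+
    show "((\<lambda>s. g *v w2 s) has_vector_derivative 2 *\<^sub>R crossC (g *v w1 t) (g *v w3 t)) (at t)"
      by (rule has_vector_derivative_phi_isometry[OF d2 g]) (rule normal; simp)+
    show "((\<lambda>s. g *v w3 s) has_vector_derivative - 2 *\<^sub>R crossC (g *v w1 t) (g *v w2 t)) (at t)"
      by (rule has_vector_derivative_phi_isometry[OF d3 g]) (rule normal; simp)+
  qed
qed

end
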